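(* Let $t \geq 2$ and $n \geq 1$ be integers and let $x = \left[\frac{nt-1}{t-1}\right]$. Then $x \leq R_{t-1,t}(K_{1,n}) \leq x+1$. Moreover, if $x$ is even, then $R_{t-1,t}(K_{1,n}) = x+1$.
   Context: $[a]$ denotes the integer part (floor) of a real number $a$. $K_{1,n}$ is the star with $n$ edges. For a graph $G$ and integers $1 \leq s < t$, $R_{s,t}(G)$ is the smallest positive integer $N$ such that every coloring of the edges of the complete graph $K_N$ with $t$ colors contains a (not necessarily induced) subgraph isomorphic to $G$ whose edges use at most $s$ distinct colors. *)

theory Defs
  imports Main
begin

text \<open>A (finite simple) graph is a pair (V, E) of a vertex set and a set of
  2-element edges (each edge a subset of V). Vertices of the complete graph K_N
  are 0,...,N-1.\<close>

type_synonym 'v graph = "'v set \<times> 'v set set"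

definition complete_edges :: "nat \<Rightarrow> nat set set" where
  "complete_edges N = {{u, v} | u v. u < N \<and> v < N \<and> u \<noteq> v}"

definition is_coloring :: "nat \<Rightarrow> nat \<Rightarrow> (nat set \<Rightarrow> nat) \<Rightarrow> bool" where
  "is_coloring N t c \<longleftrightarrow> (\<forall>e \<in> complete_edges N. c e < t)"

text \<open>K_N under coloring c contains a (not necessarily induced) copy of G whose
  edges use at most s distinct colors: an injective embedding of the vertices of G
  into the vertices of K_N; the images of the edges of G are edges of K_N.\<close>
definition has_s_colored_copy :: "'v graph \<Rightarrow> nat \<Rightarrow> nat \<Rightarrow> (nat set \<Rightarrow> nat) \<Rightarrow> bool" where
  "has_s_colored_copy G s N c \<longleftrightarrow>
     (\<exists>f. inj_on f (fst G) \<and> f ` fst G \<subseteq> {..<N} \<and>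
          card (c ` ((\<lambda>e. f ` e) ` snd G)) \<le> s)"

definition gen_ramsey :: "nat \<Rightarrow> nat \<Rightarrow> 'v graph \<Rightarrow> nat" where
  "gen_ramsey s t G = (LEAST N. 0 < N \<and>
      (\<forall>c. is_coloring N t c \<longrightarrow> has_s_colored_copy G s N c))"

definition star :: "nat \<Rightarrow> nat graph" where
  "star n = ({0..n}, {{0, i} | i. 1 \<le> i \<and> i \<le> n})"

end

theory Submission
  imports Defs
begin

text \<open>Upper bound: at the centre of \<open>K_(x+1)\<close> the \<open>x\<close> edges carry \<open>t\<close> colours, and
  \<open>n t \<le> (x + 1)(t - 1)\<close> forces some colour to occur at most \<open>x - n\<close> times, so at least \<open>n\<close>
  edges avoid it and form a star using at most \<open>t - 1\<close> colours.

  Lower bound: a \<open>t\<close>-colouring of \<open>K_N\<close> in which every vertex sees every colour at least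
  \<open>N - n\<close> times has no such star, because \<open>n\<close> edges at a vertex missing some colour would
  leave fewer than \<open>N - n\<close> edges for it. For even \<open>M\<close> such a colouring of \<open>K_M\<close> with
  threshold \<open>M - n\<close> is obtained from a 1-factorisation of \<open>K_M\<close> by grouping its \<open>M - 1\<close>
  perfect matchings into \<open>t\<close> blocks of at least \<open>M - n\<close> matchings, which is possible when
  \<open>M (t - 1) \<le> n t - 1\<close>, i.e. iff \<open>M \<le> x\<close>. Deleting a vertex lowers each colour degree by
  at most one, which handles odd \<open>N\<close>; only \<open>N = x\<close> with \<open>x\<close> odd escapes.\<close>

lemma star_edges_eq: "{{0, i} | i. 1 \<le> i \<and> i \<le> n} = (\<lambda>i. {0::nat, i}) ` {1..n}"
  by auto

lemma has_star_copy_iff: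
  "has_s_colored_copy (star n) s N c \<longleftrightarrow>
     (\<exists>v L. v < N \<and> L \<subseteq> {..<N} - {v} \<and> card L = n \<and> card ((\<lambda>w. c {v, w}) ` L) \<le> s)"
proof
  assume "has_s_colored_copy (star n) s N c"
  then obtain f where inj: "inj_on f {0..n}" and img: "f ` {0..n} \<subseteq> {..<N}"
    and cols: "card (c ` (image f ` (\<lambda>i. {0, i}) ` {1..n})) \<le> s"
    unfolding has_s_colored_copy_def star_def star_edges_eq by auto
  have "f i \<noteq> f 0" if "i \<in> {1..n}" for i
    using inj that by (auto dest: inj_onD)
  then have "f ` {1..n} \<subseteq> {..<N} - {f 0}"
    using img by (auto simp: image_subset_iff)
  moreover have "card (f ` {1..n}) = n"
    using inj by (simp add: card_image inj_on_subset)
  moreover have "c ` (image f ` (\<lambda>i. {0, i}) ` {1..n}) = (\<lambda>w. c {f 0, w}) ` f ` {1..n}"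
    by (simp add: image_image)
  ultimately show "\<exists>v L. v < N \<and> L \<subseteq> {..<N} - {v} \<and> card L = n \<and> card ((\<lambda>w. c {v, w}) ` L) \<le> s"
    using img cols by (intro exI[of _ "f 0"] exI[of _ "f ` {1..n}"]) (auto simp: image_subset_iff)
next
  assume "\<exists>v L. v < N \<and> L \<subseteq> {..<N} - {v} \<and> card L = n \<and> card ((\<lambda>w. c {v, w}) ` L) \<le> s"
  then obtain v L where v: "v < N" and L: "L \<subseteq> {..<N} - {v}" "card L = n"
    and cols: "card ((\<lambda>w. c {v, w}) ` L) \<le> s" by blast
  have "finite L" using L(1) finite_subset by blast
  then obtain h where h: "bij_betw h {1..n} L"
    using L(2) finite_same_card_bij[of "{1..n}" L] by auto
  define f where "f i = (if i = 0 then v else h i)" for i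
  have "f ` {1..n} = h ` {1..n}"
    by (rule image_cong) (auto simp: f_def)
  then have f_leaves: "f ` {1..n} = L"
    using h by (simp add: bij_betw_def)
  have "inj_on f {1..n} \<longleftrightarrow> inj_on h {1..n}"
    by (rule inj_on_cong) (simp add: f_def)
  then have "inj_on f {1..n}"
    using h by (simp add: bij_betw_def)
  moreover have zero_to_n: "{0..n} = insert 0 {1..n}"
    by auto
  ultimately have "inj_on f {0..n}"
    using f_leaves L(1) by (auto simp: f_def)
  moreover have "f ` {0..n} \<subseteq> {..<N}"
    using f_leaves L(1) v by (auto simp: zero_to_n f_def)
  moreover have "c ` (image f ` (\<lambda>i. {0, i}) ` {1..n}) = (\<lambda>w. c {v, w}) ` L"
    unfolding f_leaves[symmetric] by (simp add: image_image f_def insert_commute)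
  ultimately show "has_s_colored_copy (star n) s N c"
    using cols unfolding has_s_colored_copy_def star_def star_edges_eq by auto
qed

lemma is_coloringD:
  assumes "is_coloring N t c" "v < N" "w < N" "v \<noteq> w"
  shows "c {v, w} < t"
  using assms unfolding is_coloring_def complete_edges_def by blast

definition colour_degree :: "nat \<Rightarrow> (nat set \<Rightarrow> nat) \<Rightarrow> nat \<Rightarrow> nat \<Rightarrow> nat" where
  "colour_degree N c v j = card {w. w < N \<and> w \<noteq> v \<and> c {v, w} = j}"

lemma card_other_colour_neighbours:
  assumes "v < N"
  shows "card {w. w < N \<and> w \<noteq> v \<and> c {v, w} \<noteq> j} = N - 1 - colour_degree N c v j"
proof -
  have "{w. w < N \<and> w \<noteq> v \<and> c {v, w} \<noteq> j} = ({..<N} - {v}) - {w. w < N \<and> w \<noteq> v \<and> c {v, w} = j}"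
    by auto
  also have "card \<dots> = card ({..<N} - {v}) - colour_degree N c v j"
    unfolding colour_degree_def by (rule card_Diff_subset) auto
  finally show ?thesis
    using assms by simp
qed

lemma sum_colour_degree:
  assumes "is_coloring N t c" "v < N"
  shows "(\<Sum>j<t. colour_degree N c v j) = N - 1"
proof -
  have "(\<Sum>j<t. colour_degree N c v j) = card (\<Union>j<t. {w. w < N \<and> w \<noteq> v \<and> c {v, w} = j})"
    unfolding colour_degree_def by (rule card_UN_disjoint[symmetric]) auto
  also have "(\<Union>j<t. {w. w < N \<and> w \<noteq> v \<and> c {v, w} = j}) = {..<N} - {v}"
    using is_coloringD[OF assms(1,2)] by auto
  finally show ?thesis
    using assms(2) by simp
qed

lemma no_star_copy_if_colour_degrees_large:
  assumes col: "is_coloring N t c" and "1 \<le> n"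
    and deg: "\<And>v j. v < N \<Longrightarrow> j < t \<Longrightarrow> N - n \<le> colour_degree N c v j"
  shows "\<not> has_s_colored_copy (star n) (t - 1) N c"
proof
  assume "has_s_colored_copy (star n) (t - 1) N c"
  then obtain v L where v: "v < N" and L: "L \<subseteq> {..<N} - {v}" "card L = n"
    and cols: "card ((\<lambda>w. c {v, w}) ` L) \<le> t - 1"
    unfolding has_star_copy_iff by blast
  have "L \<noteq> {}"
    using L(2) \<open>1 \<le> n\<close> by auto
  have cols_sub: "(\<lambda>w. c {v, w}) ` L \<subseteq> {..<t}"
    using L(1) is_coloringD[OF col v] by auto
  have "(\<lambda>w. c {v, w}) ` L \<noteq> {..<t}"
  proof
    assume "(\<lambda>w. c {v, w}) ` L = {..<t}"
    then have "t = 0"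
      using cols by simp
    with \<open>(\<lambda>w. c {v, w}) ` L = {..<t}\<close> \<open>L \<noteq> {}\<close> show False
      by simp
  qed
  then obtain j where "j < t" "j \<notin> (\<lambda>w. c {v, w}) ` L"
    using cols_sub by blast
  then have "L \<subseteq> {w. w < N \<and> w \<noteq> v \<and> c {v, w} \<noteq> j}"
    using L(1) by auto
  then have "n \<le> N - 1 - colour_degree N c v j"
    using L(2) card_mono[of "{w. w < N \<and> w \<noteq> v \<and> c {v, w} \<noteq> j}" L]
    by (simp add: card_other_colour_neighbours[OF v])
  moreover have "N - n \<le> colour_degree N c v j"
    using deg v \<open>j < t\<close> .
  ultimately show False
    using \<open>1 \<le> n\<close> by linarith
qed

lemma star_copy_in_every_colouring:
  assumes col: "is_coloring (x + 1) t c" and "1 \<le> t" and "n \<le> x"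
    and "n * t \<le> (x + 1) * (t - 1)"
  shows "has_s_colored_copy (star n) (t - 1) (x + 1) c"
proof -
  have "\<exists>j<t. colour_degree (x + 1) c 0 j \<le> x - n"
  proof (rule ccontr)
    assume "\<not> ?thesis"
    then have "(\<Sum>j<t. x + 1 - n) \<le> (\<Sum>j<t. colour_degree (x + 1) c 0 j)"
      by (intro sum_mono) auto
    then have "t * (x + 1 - n) \<le> x"
      using sum_colour_degree[OF col] by simp
    moreover have "x + 1 \<le> t * (x + 1)"
      using \<open>1 \<le> t\<close> by (metis mult_1 mult_le_mono1)
    then have "x + 1 \<le> t * (x + 1 - n)"
      using assms(4) by (simp add: diff_mult_distrib diff_mult_distrib2 mult.commute)
    ultimately show False
      by linarith
  qed
  then obtain j where "j < t" and j: "colour_degree (x + 1) c 0 j \<le> x - n"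
    by blast
  define B where "B = {w. w < x + 1 \<and> w \<noteq> 0 \<and> c {0, w} \<noteq> j}"
  have "n \<le> card B"
    using j \<open>n \<le> x\<close> card_other_colour_neighbours[of 0 "x + 1" c j] unfolding B_def by simp
  then obtain L where L: "L \<subseteq> B" "card L = n"
    by (meson obtain_subset_with_card_n)
  have "(\<lambda>w. c {0, w}) ` L \<subseteq> {..<t} - {j}"
    using L(1) is_coloringD[OF col, of 0] unfolding B_def by auto
  then have "card ((\<lambda>w. c {0, w}) ` L) \<le> t - 1"
    using card_mono[of "{..<t} - {j}"] \<open>j < t\<close> by fastforce
  then show ?thesis
    unfolding has_star_copy_iff using L unfolding B_def
    by (intro exI[of _ 0] exI[of _ L]) auto
qed

lemma double_mult_half_mod:
  fixes K i :: nat
  assumes "odd K" "i < K"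
  shows "2 * i * ((K + 1) div 2) mod K = i"
proof -
  have "2 * ((K + 1) div 2) = K + 1"
    using assms(1) by simp
  then have "2 * i * ((K + 1) div 2) = i * K + i"
    by (metis mult.assoc mult.commute add_mult_distrib2 mult_1_right)
  then show ?thesis
    using assms(2) by simp
qed

text \<open>For odd \<open>K\<close> this is the round-robin 1-factorisation of \<open>K_(K+1)\<close>: the vertices below
  \<open>K\<close> are residues mod \<open>K\<close>, the edge \<open>{u, w}\<close> between them gets the label \<open>(u + w)/2 mod K\<close>
  (\<open>(K + 1) div 2\<close> inverts 2), and the edge \<open>{w, K}\<close> gets the label \<open>w\<close>.\<close>

definition round_robin_label :: "nat \<Rightarrow> nat set \<Rightarrow> nat" where
  "round_robin_label K e = (if K \<in> e then \<Sum>e - K else (\<Sum>e * ((K + 1) div 2)) mod K)"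

lemma round_robin_label_partner:
  assumes "odd K" "v \<le> K" "i < K"
  shows "\<exists>w\<le>K. w \<noteq> v \<and> round_robin_label K {v, w} = i"
proof (cases "v = K \<or> i = v")
  case True
  then show ?thesis
    using assms by (intro exI[of _ "if v = K then i else K"]) (auto simp: round_robin_label_def)
next
  case False
  then have "v < K" "i \<noteq> v"
    using assms(2) by auto
  define w where "w = (2 * i + K - v) mod K"
  have "w < K"
    using \<open>i < K\<close> by (simp add: w_def)
  have sum_mod: "(v + w) mod K = 2 * i mod K"
  proof -
    have "(v + w) mod K = (v + (2 * i + K - v)) mod K"
      by (simp add: w_def mod_add_right_eq)
    then show ?thesis
      using \<open>v < K\<close> by simp
  qed
  have "w \<noteq> v"
  proof
    assume "w = v"
    then have "2 * v mod K = 2 * i mod K"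
      using sum_mod by (simp add: mult_2)
    then have "2 * v * ((K + 1) div 2) mod K = 2 * i * ((K + 1) div 2) mod K"
      by (metis mod_mult_left_eq)
    then show False
      using double_mult_half_mod[OF assms(1)] \<open>v < K\<close> assms(3) \<open>i \<noteq> v\<close> by simp
  qed
  have "round_robin_label K {v, w} = (v + w) * ((K + 1) div 2) mod K"
    using \<open>w < K\<close> \<open>v < K\<close> \<open>w \<noteq> v\<close> by (simp add: round_robin_label_def)
  also have "\<dots> = 2 * i * ((K + 1) div 2) mod K"
    using sum_mod by (metis mod_mult_left_eq)
  also have "\<dots> = i"
    using double_mult_half_mod[OF assms(1,3)] .
  finally show ?thesis
    using \<open>w < K\<close> \<open>w \<noteq> v\<close> by (intro exI[of _ w]) auto
qed

definition block_colouring :: "nat \<Rightarrow> nat \<Rightarrow> nat \<Rightarrow> nat set \<Rightarrow> nat" where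
  "block_colouring K t m e = min (round_robin_label K e div m) (t - 1)"

lemma colour_degree_block_colouring:
  assumes "odd K" "t * m \<le> K" "v \<le> K" "j < t"
  shows "m \<le> colour_degree (K + 1) (block_colouring K t m) v j"
proof -
  define S where "S = {w. w < K + 1 \<and> w \<noteq> v \<and> block_colouring K t m {v, w} = j}"
  have "{j * m..<j * m + m} \<subseteq> (\<lambda>w. round_robin_label K {v, w}) ` S"
  proof
    fix i assume i: "i \<in> {j * m..<j * m + m}"
    have "j * m + m \<le> t * m"
      using \<open>j < t\<close> by (metis Suc_leI add.commute mult_Suc mult_le_mono1)
    then obtain w where w: "w \<le> K" "w \<noteq> v" "round_robin_label K {v, w} = i"
      using round_robin_label_partner[OF assms(1,3), of i] i assms(2) by auto
    have "i div m = j"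
      using i by (intro div_nat_eqI) (auto simp: algebra_simps)
    then have "w \<in> S"
      using w \<open>j < t\<close> by (simp add: S_def block_colouring_def)
    then show "i \<in> (\<lambda>w. round_robin_label K {v, w}) ` S"
      using w(3) by force
  qed
  then have "card {j * m..<j * m + m} \<le> card ((\<lambda>w. round_robin_label K {v, w}) ` S)"
    by (rule card_mono[rotated]) (simp add: S_def)
  then have "m \<le> card ((\<lambda>w. round_robin_label K {v, w}) ` S)"
    by simp
  also have "\<dots> \<le> card S"
    by (rule card_image_le) (simp add: S_def)
  finally show ?thesis
    by (simp add: colour_degree_def S_def)
qed

lemma colour_degree_le_restrict:
  assumes "N \<le> M"
  shows "colour_degree M c v j \<le> colour_degree N c v j + (M - N)"
proof -
  have "{w. w < M \<and> w \<noteq> v \<and> c {v, w} = j} \<subseteq> {w. w < N \<and> w \<noteq> v \<and> c {v, w} = j} \<union> {N..<M}"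
    by auto
  then have "colour_degree M c v j \<le> card ({w. w < N \<and> w \<noteq> v \<and> c {v, w} = j} \<union> {N..<M})"
    unfolding colour_degree_def by (rule card_mono[rotated]) auto
  also have "\<dots> \<le> colour_degree N c v j + (M - N)"
    unfolding colour_degree_def using card_Un_le[of _ "{N..<M}"] by simp
  finally show ?thesis .
qed

lemma colouring_without_star_copy:
  assumes "1 \<le> n" "1 \<le> t" "0 < N" "even M" "N \<le> M" "M \<le> N + 1"
    and "M * (t - 1) \<le> n * t - 1"
  shows "\<exists>c. is_coloring N t c \<and> \<not> has_s_colored_copy (star n) (t - 1) N c"
proof -
  define K where "K = M - 1"
  have "odd K" "M = K + 1"
    using assms(3-5) unfolding K_def by auto
  have "t * (M - n) \<le> K"
  proof -
    have "M \<le> M * t" "1 \<le> n * t"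
      using assms(1,2) by simp_all
    moreover have "t * (M - n) = M * t - n * t" "M * (t - 1) = M * t - M"
      by (simp_all add: diff_mult_distrib2 mult.commute)
    ultimately show ?thesis
      using assms(7) unfolding K_def by linarith
  qed
  define c where "c = block_colouring K t (M - n)"
  have "is_coloring N t c"
    using assms(2) by (auto simp: is_coloring_def c_def block_colouring_def min_def)
  moreover have "N - n \<le> colour_degree N c v j" if "v < N" "j < t" for v j
  proof -
    have "v \<le> K"
      using \<open>v < N\<close> assms(5) \<open>M = K + 1\<close> by simp
    then have "M - n \<le> colour_degree M c v j"
      using colour_degree_block_colouring[OF \<open>odd K\<close> \<open>t * (M - n) \<le> K\<close> _ \<open>j < t\<close>]
      by (simp add: c_def \<open>M = K + 1\<close>)
    moreover have "colour_degree M c v j \<le> colour_degree N c v j + (M - N)"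
      using assms(5) by (rule colour_degree_le_restrict)
    ultimately show ?thesis
      using assms(5,6) by linarith
  qed
  ultimately show ?thesis
    using no_star_copy_if_colour_degrees_large[OF _ assms(1)] by blast
qed

lemma colouring_without_star_copy_upto:
  assumes "1 \<le> n" "1 \<le> t" "x * (t - 1) \<le> n * t - 1" "0 < N" "N \<le> x" "even x \<or> N < x"
  shows "\<exists>c. is_coloring N t c \<and> \<not> has_s_colored_copy (star n) (t - 1) N c"
proof -
  define M where "M = (if even N then N else N + 1)"
  have "M \<le> x"
    using assms(5,6) unfolding M_def by (cases "N = x") auto
  then have "M * (t - 1) \<le> n * t - 1"
    using assms(3) by (meson le_trans mult_le_mono1)
  then show ?thesis
    using colouring_without_star_copy[of n t N M] assms(1,2,4) unfolding M_def by auto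
qed

lemma gen_ramsey_least:
  assumes "0 < N" "\<forall>c. is_coloring N t c \<longrightarrow> has_s_colored_copy G s N c"
  shows "gen_ramsey s t G \<le> N" and "0 < gen_ramsey s t G"
    and "\<forall>c. is_coloring (gen_ramsey s t G) t c \<longrightarrow> has_s_colored_copy G s (gen_ramsey s t G) c"
proof -
  define P where "P N' \<longleftrightarrow> 0 < N' \<and> (\<forall>c. is_coloring N' t c \<longrightarrow> has_s_colored_copy G s N' c)"
    for N'
  have "gen_ramsey s t G = Least P"
    unfolding gen_ramsey_def P_def ..
  moreover have "P N"
    using assms unfolding P_def by blast
  ultimately show "gen_ramsey s t G \<le> N" and "0 < gen_ramsey s t G"
    and "\<forall>c. is_coloring (gen_ramsey s t G) t c \<longrightarrow> has_s_colored_copy G s (gen_ramsey s t G) c"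
    using Least_le[of P N] LeastI[of P N] unfolding P_def by auto
qed

lemma div_pred_bounds:
  fixes n t :: nat
  assumes "2 \<le> t" "1 \<le> n"
  defines "x \<equiv> (n * t - 1) div (t - 1)"
  shows "n \<le> x" and "x * (t - 1) \<le> n * t - 1" and "n * t \<le> (x + 1) * (t - 1)"
proof -
  have "n * (t - 1) \<le> n * t - 1"
    using assms(1,2) by (simp add: diff_mult_distrib2)
  then have "n * (t - 1) div (t - 1) \<le> x"
    unfolding x_def by (rule div_le_mono)
  then show "n \<le> x"
    using assms(1) by simp
  show "x * (t - 1) \<le> n * t - 1"
    unfolding x_def by (rule div_times_less_eq_dividend)
  have "n * t - 1 < (t - 1) + x * (t - 1)"
    unfolding x_def using assms(1) by (intro dividend_less_div_times) simp
  moreover have "1 \<le> n * t"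
    using assms(1,2) by simp
  ultimately show "n * t \<le> (x + 1) * (t - 1)"
    by simp
qed

theorem corollary1:
  fixes t n x :: nat
  assumes "t \<ge> 2" and "n \<ge> 1"
    and "x = (n * t - 1) div (t - 1)"
  shows "x \<le> gen_ramsey (t - 1) t (star n) \<and> gen_ramsey (t - 1) t (star n) \<le> x + 1
         \<and> (even x \<longrightarrow> gen_ramsey (t - 1) t (star n) = x + 1)"
proof -
  let ?R = "gen_ramsey (t - 1) t (star n)"
  have "n \<le> x" and x_bound: "x * (t - 1) \<le> n * t - 1" and "n * t \<le> (x + 1) * (t - 1)"
    using div_pred_bounds[OF assms(1,2)] assms(3) by simp_all
  then have x_forces: "\<forall>c. is_coloring (x + 1) t c \<longrightarrow> has_s_colored_copy (star n) (t - 1) (x + 1) c"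
    using star_copy_in_every_colouring assms(1) by simp
  have "?R \<le> x + 1" and "0 < ?R"
    and R_forces: "\<forall>c. is_coloring ?R t c \<longrightarrow> has_s_colored_copy (star n) (t - 1) ?R c"
    using gen_ramsey_least[OF _ x_forces] by simp_all
  have "x \<le> ?R"
  proof (rule ccontr)
    assume "\<not> x \<le> ?R"
    then show False
      using colouring_without_star_copy_upto[OF _ _ x_bound \<open>0 < ?R\<close>] R_forces assms(1,2)
      by auto
  qed
  moreover have "even x \<longrightarrow> ?R \<noteq> x"
    using colouring_without_star_copy_upto[OF _ _ x_bound, of x] R_forces \<open>n \<le> x\<close> assms(1,2)
    by auto
  ultimately show ?thesis
    using \<open>?R \<le> x + 1\<close> by auto
qed

end
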